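(* Let $\Omega\subseteq\mathbb{R}^2$ be open and let $s:\Omega\to\mathbb{R}^n$ be a smooth surface. For a nondegenerate triangle with vertices $a,b,c\in\mathbb{R}^2$ let $a'$ be the mirror vertex of $a$ (the reflection of $a$ across the line through $b$ and $c$). For points $p,q,r$ in a Euclidean space write $\langle p;q;r\rangle=p\wedge q+q\wedge r+r\wedge p$. Then for every $x\in\Omega$, $$\lim \frac{1}{\big[\langle a;b;c\rangle-\langle a';b;c\rangle\big]\cdot\mathbb{I}_2}\Big[\langle s(a);s(b);s(c)\rangle-\langle s(a');s(b);s(c)\rangle\Big] \;=\; \partial_{1}s(x)\wedge\partial_{2}s(x),$$ where the limit is taken as $(a,b,c)\to(x,x,x)$ in $\mathbb{R}^2\times\mathbb{R}^2\times\mathbb{R}^2$ over triples such that the triangle $a,b,c$ is nondegenerate (i.e. $a\wedge b+b\wedge c+c\wedge a\neq 0$) and $a'$ is a balanced mirror vertex of that triangle (with $a,b,c,a'\in\Omega$), and the convergence is in the space of bivectors $\Lambda^2\mathbb{R}^n$.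
   Context: $\wedge$ denotes the exterior (outer) product; bivectors in $\mathbb{R}^n$ are elements of $\Lambda^2\mathbb{R}^n$, with the Euclidean structure in which $\{h_j\wedge h_k\}_{j<k}$ is orthonormal for an orthonormal basis $\{h_1,\dots,h_n\}$ of $\mathbb{R}^n$. For an orthonormal basis $\{\ell_1,\ell_2\}$ of $\mathbb{R}^2$, $\mathbb{I}_2=\ell_1\wedge\ell_2$ and for a bivector $B=\beta\,\ell_1\wedge\ell_2$ in $\mathbb{R}^2$, $B\cdot\mathbb{I}_2=\beta$; note $\langle a;b;c\rangle-\langle a';b;c\rangle=(a'-a)\wedge(c-b)$. $\partial_i s(x)=\sum_j \partial_{\ell_i}\sigma_j(x)\,h_j$ where $\sigma_j=s\cdot h_j$. A real function $\psi:\Omega\to\mathbb{R}$ is smooth if it is $C^2$ on $\Omega$ and the eigenvalues of its Hessian are bounded in absolute value uniformly on $\Omega$; a surface $s:\Omega\to\mathbb{R}^n$ is smooth if every component $\sigma_j$ is a smooth function. The mirror vertex of $a$ in the nondegenerate triangle $a,b,c$ is $a'=-\big[a+2b\frac{(a-c)\cdot(c-b)}{|c-b|^2}+2c\frac{(b-a)\cdot(c-b)}{|c-b|^2}\big]$; it is balanced if $\bar a=\frac12(a+a')$ lies in the closed segment $[b,c]$. *)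

theory Defs
  imports "HOL-Analysis.Analysis"
begin

text \<open>Bivectors in R^n are represented as antisymmetric matrices:
  the bivector u wedge v has (j,k)-coefficient u_j v_k - u_k v_j.\<close>
definition wedge :: "real^'n \<Rightarrow> real^'n \<Rightarrow> real^'n^'n" where
  "wedge u v = (\<chi> j k. u$j * v$k - u$k * v$j)"

definition tri :: "real^'n \<Rightarrow> real^'n \<Rightarrow> real^'n \<Rightarrow> real^'n^'n" where
  "tri p q r = wedge p q + wedge q r + wedge r p"

text \<open>For a bivector B = beta l1 wedge l2 in R^2, B . I_2 = beta.\<close>
definition dotI2 :: "real^2^2 \<Rightarrow> real" where
  "dotI2 B = B$1$2"

definition pd :: "2 \<Rightarrow> (real^2 \<Rightarrow> real) \<Rightarrow> real^2 \<Rightarrow> real" where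
  "pd i f x = deriv (\<lambda>t. f (x + t *\<^sub>R axis i 1)) 0"

definition has_pd :: "2 \<Rightarrow> (real^2 \<Rightarrow> real) \<Rightarrow> real^2 \<Rightarrow> bool" where
  "has_pd i f x \<longleftrightarrow> (\<lambda>t. f (x + t *\<^sub>R axis i 1)) differentiable (at 0)"

definition pds :: "2 \<Rightarrow> (real^2 \<Rightarrow> real^'n) \<Rightarrow> real^2 \<Rightarrow> real^'n" where
  "pds i s x = (\<chi> j. pd i (\<lambda>y. s y $ j) x)"

definition C2_on :: "(real^2) set \<Rightarrow> (real^2 \<Rightarrow> real) \<Rightarrow> bool" where
  "C2_on \<Omega> \<psi> \<longleftrightarrow> continuous_on \<Omega> \<psi>
     \<and> (\<forall>i. \<forall>x\<in>\<Omega>. has_pd i \<psi> x) \<and> (\<forall>i. continuous_on \<Omega> (pd i \<psi>))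
     \<and> (\<forall>i j. \<forall>x\<in>\<Omega>. has_pd j (pd i \<psi>) x)
     \<and> (\<forall>i j. continuous_on \<Omega> (pd j (pd i \<psi>)))"

definition hessian :: "(real^2 \<Rightarrow> real) \<Rightarrow> real^2 \<Rightarrow> real^2^2" where
  "hessian \<psi> x = (\<chi> i j. pd j (pd i \<psi>) x)"

definition eigenvalue :: "real^'m^'m \<Rightarrow> real \<Rightarrow> bool" where
  "eigenvalue A l \<longleftrightarrow> (\<exists>v. v \<noteq> 0 \<and> A *v v = l *\<^sub>R v)"

definition smooth_fun :: "(real^2) set \<Rightarrow> (real^2 \<Rightarrow> real) \<Rightarrow> bool" where
  "smooth_fun \<Omega> \<psi> \<longleftrightarrow> C2_on \<Omega> \<psi>
     \<and> (\<exists>M. \<forall>x\<in>\<Omega>. \<forall>l. eigenvalue (hessian \<psi> x) l \<longrightarrow> \<bar>l\<bar> \<le> M)"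

definition smooth_surface :: "(real^2) set \<Rightarrow> (real^2 \<Rightarrow> real^'n) \<Rightarrow> bool" where
  "smooth_surface \<Omega> s \<longleftrightarrow> (\<forall>j. smooth_fun \<Omega> (\<lambda>x. s x $ j))"

definition nondegenerate :: "real^2 \<Rightarrow> real^2 \<Rightarrow> real^2 \<Rightarrow> bool" where
  "nondegenerate a b c \<longleftrightarrow> tri a b c \<noteq> 0"

definition mirror :: "real^2 \<Rightarrow> real^2 \<Rightarrow> real^2 \<Rightarrow> real^2" where
  "mirror a b c = - (a + (2 * (((a - c) \<bullet> (c - b)) / (norm (c - b))^2)) *\<^sub>R b
                       + (2 * (((b - a) \<bullet> (c - b)) / (norm (c - b))^2)) *\<^sub>R c)"

definition balanced :: "real^2 \<Rightarrow> real^2 \<Rightarrow> real^2 \<Rightarrow> bool" where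
  "balanced a b c \<longleftrightarrow> (1/2) *\<^sub>R (a + mirror a b c) \<in> closed_segment b c"

end

theory Submission
  imports Defs
begin

text \<open>Put \<open>u = a' - a\<close> and \<open>v = c - b\<close>. Then the numerator is \<open>(s a' - s a) \<and> (s c - s b)\<close> and the
  denominator is the \<open>\<ell>\<^sub>1 \<and> \<ell>\<^sub>2\<close>-coefficient of \<open>u \<and> v\<close>, which is twice that of the triangle.
  Since \<open>a'\<close> is the reflection of \<open>a\<close> in the line \<open>bc\<close>, \<open>u\<close> is orthogonal to \<open>v\<close>, so
  \<open>|u| |v|\<close> equals the absolute value of the denominator; and balancedness keeps \<open>a'\<close> close to \<open>x\<close>.
  Continuity of the partial derivatives makes \<open>s\<close> strictly differentiable at \<open>x\<close> (mean value
  theorem along the two axes), so \<open>s a' - s a = Ds(x) u + o(|u|)\<close> and \<open>s c - s b = Ds(x) v + o(|v|)\<close>.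
  As \<open>Ds(x) u \<and> Ds(x) v\<close> is the denominator times \<open>\<partial>\<^sub>1 s(x) \<and> \<partial>\<^sub>2 s(x)\<close>, the quotient differs
  from the latter by \<open>o(|u| |v|) / |u \<and> v| = o(1)\<close>.\<close>

section \<open>Bivectors\<close>

lemma tri_eq_wedge: "tri p q r = wedge (q - p) (r - q)"
  by (simp add: tri_def wedge_def vec_eq_iff algebra_simps)

lemma tri_diff: "tri p q r - tri p' q r = wedge (p' - p) (r - q)"
  by (simp add: tri_def wedge_def vec_eq_iff algebra_simps)

lemma wedge_diff: "wedge U V - wedge A B = wedge A (V - B) + wedge (U - A) V"
  by (simp add: wedge_def vec_eq_iff algebra_simps)

lemma wedge_linear_combination:
  "wedge (u1 *\<^sub>R P + u2 *\<^sub>R Q) (v1 *\<^sub>R P + v2 *\<^sub>R Q) = (u1 * v2 - u2 * v1) *\<^sub>R wedge P Q"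
  by (simp add: wedge_def vec_eq_iff algebra_simps)

lemma norm_outer_product: "norm (\<chi> j. p $ j *\<^sub>R q) = norm p * norm (q :: real^'n)"
proof -
  have "norm (\<chi> j. p $ j *\<^sub>R q) = L2_set (\<lambda>j. norm q * \<bar>p $ j\<bar>) UNIV"
    unfolding norm_vec_def[of "\<chi> j. p $ j *\<^sub>R q"] by (simp add: mult.commute)
  also have "\<dots> = norm q * norm p"
    unfolding norm_vec_def[of p] by (simp add: L2_set_right_distrib)
  finally show ?thesis by simp
qed

lemma norm_wedge_le: "norm (wedge p q) \<le> 2 * norm p * norm q"
proof -
  have "wedge p q = (\<chi> j. p $ j *\<^sub>R q) - (\<chi> j. q $ j *\<^sub>R p)"
    by (simp add: wedge_def vec_eq_iff)
  then have "norm (wedge p q) \<le> norm (\<chi> j. p $ j *\<^sub>R q) + norm (\<chi> j. q $ j *\<^sub>R p)"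
    by (metis norm_triangle_ineq4)
  then show ?thesis by (simp add: norm_outer_product)
qed

lemma norm_combination_le:
  "norm (u $ 1 *\<^sub>R P + u $ 2 *\<^sub>R Q) \<le> norm (u :: real^2) * (norm P + norm Q)"
proof -
  have "norm (u $ 1 *\<^sub>R P + u $ 2 *\<^sub>R Q) \<le> \<bar>u $ 1\<bar> * norm P + \<bar>u $ 2\<bar> * norm Q"
    by (metis norm_scaleR norm_triangle_ineq)
  also have "\<dots> \<le> norm u * norm P + norm u * norm Q"
    by (intro add_mono mult_right_mono component_le_norm_cart norm_ge_zero)
  finally show ?thesis by (simp add: distrib_left)
qed

lemma dotI2_wedge: "dotI2 (wedge u v) = u $ 1 * v $ 2 - u $ 2 * v $ 1"
  by (simp add: dotI2_def wedge_def)

lemma wedge_eq_0_iff_dotI2: "wedge u v = 0 \<longleftrightarrow> dotI2 (wedge u v) = 0"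
  by (auto simp: dotI2_def wedge_def vec_eq_iff forall_2)

lemma norm_mult_norm_eq_abs_dotI2_wedge:
  fixes u v :: "real^2"
  assumes "u \<bullet> v = 0"
  shows "norm u * norm v = \<bar>dotI2 (wedge u v)\<bar>"
proof -
  have "(norm u * norm v)\<^sup>2 = (dotI2 (wedge u v))\<^sup>2 + (u \<bullet> v)\<^sup>2"
    unfolding power_mult_distrib power2_norm_eq_inner
    by (simp add: inner_vec_def sum_2 dotI2_wedge power2_eq_square algebra_simps)
  then have "(norm u * norm v)\<^sup>2 = \<bar>dotI2 (wedge u v)\<bar>\<^sup>2"
    using assms by simp
  then show ?thesis
    by (metis abs_ge_zero norm_ge_zero power2_eq_iff_nonneg zero_le_mult_iff)
qed

lemma wedge_quotient_estimate:
  fixes U V P Q :: "real^'n" and u v :: "real^2"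
  assumes U: "norm (U - (u $ 1 *\<^sub>R P + u $ 2 *\<^sub>R Q)) \<le> \<epsilon> * norm u"
    and V: "norm (V - (v $ 1 *\<^sub>R P + v $ 2 *\<^sub>R Q)) \<le> \<epsilon> * norm v"
    and uv: "norm u * norm v \<le> \<bar>dotI2 (wedge u v)\<bar>" and d0: "dotI2 (wedge u v) \<noteq> 0"
  shows "norm ((1 / dotI2 (wedge u v)) *\<^sub>R wedge U V - wedge P Q)
    \<le> 2 * \<epsilon> * (2 * (norm P + norm Q) + \<epsilon>)"
proof -
  define d where "d = dotI2 (wedge u v)"
  define K where "K = norm P + norm Q"
  define A where "A = u $ 1 *\<^sub>R P + u $ 2 *\<^sub>R Q"
  define B where "B = v $ 1 *\<^sub>R P + v $ 2 *\<^sub>R Q"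
  have "u \<noteq> 0" using d0 by (auto simp: dotI2_wedge)
  moreover have "0 \<le> \<epsilon> * norm u" using U norm_ge_zero order_trans by blast
  ultimately have "\<epsilon> \<ge> 0" by (simp add: zero_le_mult_iff)
  have K0: "K \<ge> 0" by (simp add: K_def)
  have A: "norm A \<le> norm u * K" by (simp add: A_def K_def norm_combination_le)
  have "norm V \<le> norm B + norm (V - B)" by (metis add.commute diff_add_cancel norm_triangle_ineq)
  also have "\<dots> \<le> norm v * K + \<epsilon> * norm v"
    using V norm_combination_le[of v P Q] by (simp add: B_def K_def)
  finally have V': "norm V \<le> norm v * (K + \<epsilon>)" by (simp add: algebra_simps)
  have "wedge A B = d *\<^sub>R wedge P Q"
    by (simp add: A_def B_def d_def wedge_linear_combination dotI2_wedge)
  then have "(1 / d) *\<^sub>R wedge U V - wedge P Q = (1 / d) *\<^sub>R (wedge A (V - B) + wedge (U - A) V)"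
    using d0 by (simp add: d_def wedge_diff[symmetric] algebra_simps)
  then have "norm ((1 / d) *\<^sub>R wedge U V - wedge P Q)
      \<le> (2 * norm A * norm (V - B) + 2 * norm (U - A) * norm V) / \<bar>d\<bar>"
    using norm_wedge_le[of A "V - B"] norm_wedge_le[of "U - A" V]
    by (simp add: divide_right_mono norm_triangle_le)
  also have "\<dots> \<le> (2 * \<epsilon> * (2 * K + \<epsilon>) * (norm u * norm v)) / \<bar>d\<bar>"
  proof (rule divide_right_mono)
    have "norm A * norm (V - B) \<le> (norm u * K) * (\<epsilon> * norm v)"
      using A V K0 by (intro mult_mono) (auto simp: B_def)
    moreover have "norm (U - A) * norm V \<le> (\<epsilon> * norm u) * (norm v * (K + \<epsilon>))"
      using U V' \<open>\<epsilon> \<ge> 0\<close> by (intro mult_mono) (auto simp: A_def)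
    ultimately show "2 * norm A * norm (V - B) + 2 * norm (U - A) * norm V
        \<le> 2 * \<epsilon> * (2 * K + \<epsilon>) * (norm u * norm v)"
      by (simp add: algebra_simps)
  qed simp
  also have "\<dots> \<le> 2 * \<epsilon> * (2 * K + \<epsilon>)"
    using uv d0 \<open>\<epsilon> \<ge> 0\<close> K0 by (simp add: d_def divide_le_eq mult_left_mono)
  finally show ?thesis by (simp add: d_def K_def)
qed

section \<open>The mirror vertex\<close>

lemma mirror_sub_eq:
  assumes "b \<noteq> c"
  shows "mirror a b c - a
    = 2 *\<^sub>R (b - a) - (2 * ((b - a) \<bullet> (c - b)) / (norm (c - b))\<^sup>2) *\<^sub>R (c - b)"
proof -
  define n where "n = (norm (c - b))\<^sup>2"
  define \<beta> where "\<beta> = (b - a) \<bullet> (c - b) / n"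
  have "n \<noteq> 0" using assms by (simp add: n_def)
  have "(a - c) \<bullet> (c - b) + (b - a) \<bullet> (c - b) = - n"
    by (simp add: n_def power2_norm_eq_inner inner_diff_left inner_commute)
  then have "(a - c) \<bullet> (c - b) / n = -1 - \<beta>"
    using \<open>n \<noteq> 0\<close> by (simp add: \<beta>_def field_simps)
  then have "mirror a b c = - (a + (2 * (-1 - \<beta>)) *\<^sub>R b + (2 * \<beta>) *\<^sub>R c)"
    unfolding mirror_def n_def[symmetric] \<beta>_def[symmetric] by simp
  then show ?thesis
    unfolding n_def[symmetric] times_divide_eq_right[symmetric] \<beta>_def[symmetric]
    by (simp add: algebra_simps scaleR_2)
qed

lemma mirror_sub_orthogonal:
  assumes "b \<noteq> c"
  shows "(mirror a b c - a) \<bullet> (c - b) = 0"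
proof -
  have "(norm (c - b))\<^sup>2 \<noteq> 0" using assms by simp
  then show ?thesis
    unfolding mirror_sub_eq[OF assms] inner_diff_left inner_scaleR_left dot_square_norm
    by (simp add: inner_commute)
qed

lemma dotI2_wedge_mirror_sub:
  assumes "b \<noteq> c"
  shows "dotI2 (wedge (mirror a b c - a) (c - b)) = 2 * dotI2 (tri a b c)"
proof -
  have "dotI2 (wedge (2 *\<^sub>R w - k *\<^sub>R v) v) = 2 * dotI2 (wedge w v)" for w v :: "real^2" and k
    by (simp add: dotI2_wedge algebra_simps)
  then show ?thesis
    by (simp add: mirror_sub_eq[OF assms] tri_eq_wedge)
qed

lemma nondegenerate_iff_dotI2: "nondegenerate a b c \<longleftrightarrow> dotI2 (tri a b c) \<noteq> 0"
  by (simp add: nondegenerate_def tri_eq_wedge wedge_eq_0_iff_dotI2)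

lemma nondegenerate_imp_neq: "nondegenerate a b c \<Longrightarrow> b \<noteq> c"
  by (auto simp: nondegenerate_iff_dotI2 tri_eq_wedge dotI2_wedge)

lemma norm_mirror_sub_le:
  assumes "balanced a b c"
  shows "norm (mirror a b c - x) \<le> norm (a - x) + 2 * max (norm (b - x)) (norm (c - x))"
proof -
  define m where "m = (1/2) *\<^sub>R (a + mirror a b c)"
  have "closed_segment b c \<subseteq> cball x (max (norm (b - x)) (norm (c - x)))"
    by (rule closed_segment_subset) (auto simp: dist_norm norm_minus_commute)
  then have "norm (m - x) \<le> max (norm (b - x)) (norm (c - x))"
    using assms by (auto simp: balanced_def m_def dist_norm norm_minus_commute)
  moreover have "mirror a b c - x = 2 *\<^sub>R (m - x) - (a - x)"
    by (simp add: m_def algebra_simps scaleR_2)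
  then have "norm (mirror a b c - x) \<le> 2 * norm (m - x) + norm (a - x)"
    by (metis norm_triangle_ineq4 norm_scaleR abs_numeral)
  ultimately show ?thesis by linarith
qed

section \<open>Strict differentiability from continuous partial derivatives\<close>

lemma DERIV_increment_bound:
  fixes g g' :: "real \<Rightarrow> real"
  assumes der: "\<And>t. t \<in> closed_segment 0 h \<Longrightarrow> (g has_real_derivative g' t) (at t)"
    and bound: "\<And>t. t \<in> closed_segment 0 h \<Longrightarrow> \<bar>g' t - L\<bar> \<le> B"
  shows "\<bar>g h - g 0 - L * h\<bar> \<le> B * \<bar>h\<bar>"
proof -
  have "norm ((\<lambda>t. g t - L * t) h - (\<lambda>t. g t - L * t) 0) \<le> B * norm (h - 0)"
  proof (rule differentiable_bound[OF convex_closed_segment])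
    fix t assume t: "t \<in> closed_segment 0 h"
    have "((\<lambda>t. g t - L * t) has_real_derivative g' t - L) (at t)"
      using der[OF t] by (auto intro!: derivative_eq_intros)
    then show "((\<lambda>t. g t - L * t) has_derivative (\<lambda>d. (g' t - L) * d)) (at t within closed_segment 0 h)"
      by (simp add: has_field_derivative_def has_derivative_at_withinI)
    show "onorm (\<lambda>d. (g' t - L) * d) \<le> B"
      using bound[OF t] by (intro onorm_le) (simp add: abs_mult mult_right_mono)
  qed auto
  then show ?thesis by simp
qed

lemma DERIV_along_axis:
  assumes "has_pd i f (w + t *\<^sub>R axis i 1)"
  shows "((\<lambda>\<tau>. f (w + \<tau> *\<^sub>R axis i 1)) has_real_derivative pd i f (w + t *\<^sub>R axis i 1)) (at t)"
proof -
  have shift: "(\<lambda>\<tau>. f (w + t *\<^sub>R axis i 1 + \<tau> *\<^sub>R axis i 1)) = (\<lambda>\<tau>. f (w + (\<tau> + t) *\<^sub>R axis i 1))"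
    by (simp add: algebra_simps scaleR_add_left)
  have "((\<lambda>\<tau>. f (w + t *\<^sub>R axis i 1 + \<tau> *\<^sub>R axis i 1)) has_real_derivative pd i f (w + t *\<^sub>R axis i 1)) (at 0)"
    using assms unfolding has_pd_def pd_def by (simp add: DERIV_deriv_iff_real_differentiable)
  then show ?thesis
    unfolding shift using DERIV_shift[of "\<lambda>\<tau>. f (w + \<tau> *\<^sub>R axis i 1)" _ 0 t] by simp
qed

lemma partial_increment_bound:
  assumes "\<And>p. p \<in> closed_segment w (w + h *\<^sub>R axis i 1) \<Longrightarrow> has_pd i f p \<and> \<bar>pd i f p - L\<bar> \<le> B"
  shows "\<bar>f (w + h *\<^sub>R axis i 1) - f w - L * h\<bar> \<le> B * \<bar>h\<bar>"
proof -
  have seg: "w + t *\<^sub>R axis i 1 \<in> closed_segment w (w + h *\<^sub>R axis i 1)" if t: "t \<in> closed_segment 0 h" for t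
  proof -
    obtain u where "0 \<le> u" "u \<le> 1" "t = u * h"
      using t by (auto simp: in_segment)
    then show ?thesis
      by (auto simp: in_segment algebra_simps intro!: exI[of _ u])
  qed
  have "\<bar>f (w + h *\<^sub>R axis i 1) - f (w + 0 *\<^sub>R axis i 1) - L * h\<bar> \<le> B * \<bar>h\<bar>"
  proof (rule DERIV_increment_bound[where g' = "\<lambda>t. pd i f (w + t *\<^sub>R axis i 1)"])
    fix t assume "t \<in> closed_segment 0 h"
    then have "has_pd i f (w + t *\<^sub>R axis i 1) \<and> \<bar>pd i f (w + t *\<^sub>R axis i 1) - L\<bar> \<le> B"
      using seg assms by blast
    then show "((\<lambda>t. f (w + t *\<^sub>R axis i 1)) has_real_derivative pd i f (w + t *\<^sub>R axis i 1)) (at t)"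
      and "\<bar>pd i f (w + t *\<^sub>R axis i 1) - L\<bar> \<le> B"
      by (simp_all add: DERIV_along_axis)
  qed
  then show ?thesis by simp
qed

lemma partials_increment_estimate:
  fixes f :: "real^2 \<Rightarrow> real"
  assumes near: "\<And>p i. p \<in> ball x d \<Longrightarrow> has_pd i f p \<and> \<bar>pd i f p - pd i f x\<bar> \<le> B"
    and y: "y \<in> ball x (d / 2)" and z: "z \<in> ball x (d / 2)"
  shows "\<bar>f y - f z - (pd 1 f x * (y - z) $ 1 + pd 2 f x * (y - z) $ 2)\<bar> \<le> 2 * B * norm (y - z)"
proof -
  have "d > 0" using y zero_le_dist[of x y] by (simp, linarith)
  then have "B \<ge> 0" using near[of x 1] by simp
  txt \<open>The path \<open>z \<rightarrow> w \<rightarrow> y\<close> runs parallel to the axes and stays in \<open>ball x d\<close>.\<close>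
  define w where "w = z + (y - z) $ 2 *\<^sub>R axis 2 1"
  have y_eq: "y = w + (y - z) $ 1 *\<^sub>R axis 1 1"
    by (simp add: w_def vec_eq_iff forall_2 axis_def)
  have "norm (w - x) \<le> \<bar>(w - x) $ 1\<bar> + \<bar>(w - x) $ 2\<bar>"
    using norm_le_l1_cart[of "w - x"] by (simp add: sum_2)
  also have "\<dots> \<le> norm (z - x) + norm (y - x)"
    using component_le_norm_cart[of "z - x" 1] component_le_norm_cart[of "y - x" 2]
    by (simp add: w_def axis_def)
  finally have "w \<in> ball x d" using y z by (simp add: dist_norm norm_minus_commute)
  moreover have "ball x (d / 2) \<subseteq> ball x d" using \<open>d > 0\<close> by (intro subset_ball) simp
  ultimately have segs: "closed_segment z w \<subseteq> ball x d" "closed_segment w y \<subseteq> ball x d"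
    using y z by (meson closed_segment_subset convex_ball subsetD)+
  have "\<bar>f y - f w - pd 1 f x * (y - z) $ 1\<bar> \<le> B * \<bar>(y - z) $ 1\<bar>"
    using partial_increment_bound[of w "(y - z) $ 1" 1 f "pd 1 f x" B] segs(2) near
    unfolding y_eq[symmetric] by blast
  also have "\<dots> \<le> B * norm (y - z)"
    using \<open>B \<ge> 0\<close> by (intro mult_left_mono component_le_norm_cart)
  finally have step1: "\<bar>f y - f w - pd 1 f x * (y - z) $ 1\<bar> \<le> B * norm (y - z)" .
  have "\<bar>f w - f z - pd 2 f x * (y - z) $ 2\<bar> \<le> B * \<bar>(y - z) $ 2\<bar>"
    using partial_increment_bound[of z "(y - z) $ 2" 2 f "pd 2 f x" B] segs(1) near
    unfolding w_def[symmetric] by blast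
  also have "\<dots> \<le> B * norm (y - z)"
    using \<open>B \<ge> 0\<close> by (intro mult_left_mono component_le_norm_cart)
  finally have step2: "\<bar>f w - f z - pd 2 f x * (y - z) $ 2\<bar> \<le> B * norm (y - z)" .
  have "f y - f z - (pd 1 f x * (y - z) $ 1 + pd 2 f x * (y - z) $ 2)
      = (f y - f w - pd 1 f x * (y - z) $ 1) + (f w - f z - pd 2 f x * (y - z) $ 2)"
    by simp
  then have "\<bar>f y - f z - (pd 1 f x * (y - z) $ 1 + pd 2 f x * (y - z) $ 2)\<bar>
      \<le> \<bar>f y - f w - pd 1 f x * (y - z) $ 1\<bar> + \<bar>f w - f z - pd 2 f x * (y - z) $ 2\<bar>"
    by (simp only: abs_triangle_ineq)
  with step1 step2 show ?thesis by simp
qed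

lemma partials_strict_estimate:
  fixes f :: "real^2 \<Rightarrow> real"
  assumes "open \<Omega>" "x \<in> \<Omega>"
    and has_pd: "\<forall>i. \<forall>y\<in>\<Omega>. has_pd i f y" and cont: "\<forall>i. continuous_on \<Omega> (pd i f)"
    and "\<epsilon> > 0"
  shows "\<forall>\<^sub>F (y, z) in nhds (x, x).
    \<bar>f y - f z - (pd 1 f x * (y - z) $ 1 + pd 2 f x * (y - z) $ 2)\<bar> \<le> \<epsilon> * norm (y - z)"
proof -
  have "(pd i f \<longlongrightarrow> pd i f x) (nhds x)" for i
    using cont assms(1,2) by (metis continuous_on_eq_continuous_at isCont_def tendsto_at_iff_tendsto_nhds)
  then have "\<forall>\<^sub>F p in nhds x. \<forall>i. dist (pd i f p) (pd i f x) < \<epsilon> / 2"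
    using \<open>\<epsilon> > 0\<close> by (intro eventually_all_finite tendstoD) simp_all
  moreover have "\<forall>\<^sub>F p in nhds x. p \<in> \<Omega>"
    using assms(1,2) by (rule eventually_nhds_in_open)
  ultimately have "\<forall>\<^sub>F p in nhds x. (\<forall>i. dist (pd i f p) (pd i f x) < \<epsilon> / 2) \<and> p \<in> \<Omega>"
    by (rule eventually_conj)
  then obtain d where "d > 0"
    and d: "\<And>p. dist p x < d \<Longrightarrow> (\<forall>i. dist (pd i f p) (pd i f x) < \<epsilon> / 2) \<and> p \<in> \<Omega>"
    unfolding eventually_nhds_metric by blast
  have near: "has_pd i f p \<and> \<bar>pd i f p - pd i f x\<bar> \<le> \<epsilon> / 2" if "p \<in> ball x d" for p i
  proof -
    have "dist p x < d" using that by (simp add: dist_commute)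
    then show ?thesis
      using d has_pd unfolding dist_real_def by (meson less_imp_le)
  qed
  show ?thesis
    unfolding eventually_nhds_metric
  proof (intro exI[of _ "d / 2"] conjI allI impI)
    show "d / 2 > 0" using \<open>d > 0\<close> by simp
    fix yz :: "(real^2) \<times> (real^2)" assume yz_near: "dist yz (x, x) < d / 2"
    obtain y z where yz: "yz = (y, z)" by (cases yz)
    have "y \<in> ball x (d / 2)" "z \<in> ball x (d / 2)"
      using yz_near dist_fst_le[of yz "(x, x)"] dist_snd_le[of yz "(x, x)"]
      by (simp_all add: yz dist_commute)
    from partials_increment_estimate[OF near this]
    show "case yz of (y, z) \<Rightarrow>
        \<bar>f y - f z - (pd 1 f x * (y - z) $ 1 + pd 2 f x * (y - z) $ 2)\<bar> \<le> \<epsilon> * norm (y - z)"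
      by (simp add: yz)
  qed
qed

lemma surface_strict_estimate:
  fixes s :: "real^2 \<Rightarrow> real^'n"
  assumes "open \<Omega>" "x \<in> \<Omega>"
    and "\<forall>j i. \<forall>y\<in>\<Omega>. has_pd i (\<lambda>y. s y $ j) y" and "\<forall>j i. continuous_on \<Omega> (pd i (\<lambda>y. s y $ j))"
    and "\<epsilon> > 0"
  shows "\<forall>\<^sub>F (y, z) in nhds (x, x).
    norm (s y - s z - ((y - z) $ 1 *\<^sub>R pds 1 s x + (y - z) $ 2 *\<^sub>R pds 2 s x)) \<le> \<epsilon> * norm (y - z)"
proof -
  define \<epsilon>' where "\<epsilon>' = \<epsilon> / CARD('n)"
  have "\<epsilon>' > 0" using \<open>\<epsilon> > 0\<close> by (simp add: \<epsilon>'_def)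
  have "\<forall>\<^sub>F (y, z) in nhds (x, x). \<bar>s y $ j - s z $ j - (pd 1 (\<lambda>y. s y $ j) x * (y - z) $ 1
      + pd 2 (\<lambda>y. s y $ j) x * (y - z) $ 2)\<bar> \<le> \<epsilon>' * norm (y - z)" for j
    using assms \<open>\<epsilon>' > 0\<close> by (intro partials_strict_estimate) blast+
  then have "\<forall>\<^sub>F p in nhds (x, x). \<forall>j. case p of (y, z) \<Rightarrow>
      \<bar>s y $ j - s z $ j - (pd 1 (\<lambda>y. s y $ j) x * (y - z) $ 1
      + pd 2 (\<lambda>y. s y $ j) x * (y - z) $ 2)\<bar> \<le> \<epsilon>' * norm (y - z)"
    by (rule eventually_all_finite)
  then show ?thesis
  proof (rule eventually_mono)
    fix p :: "(real^2) \<times> (real^2)"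
    obtain y z where p: "p = (y, z)" by (cases p)
    define E where "E = s y - s z - ((y - z) $ 1 *\<^sub>R pds 1 s x + (y - z) $ 2 *\<^sub>R pds 2 s x)"
    assume "\<forall>j. case p of (y, z) \<Rightarrow>
      \<bar>s y $ j - s z $ j - (pd 1 (\<lambda>y. s y $ j) x * (y - z) $ 1
      + pd 2 (\<lambda>y. s y $ j) x * (y - z) $ 2)\<bar> \<le> \<epsilon>' * norm (y - z)"
    then have "\<bar>E $ j\<bar> \<le> \<epsilon>' * norm (y - z)" for j
      by (simp add: p E_def pds_def mult.commute)
    then have "norm E \<le> (\<Sum>j\<in>(UNIV :: 'n set). \<epsilon>' * norm (y - z))"
      by (intro order_trans[OF norm_le_l1_cart sum_mono])
    also have "\<dots> = \<epsilon> * norm (y - z)" by (simp add: \<epsilon>'_def)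
    finally show "case p of (y, z) \<Rightarrow> norm (s y - s z - ((y - z) $ 1 *\<^sub>R pds 1 s x
        + (y - z) $ 2 *\<^sub>R pds 2 s x)) \<le> \<epsilon> * norm (y - z)"
      by (simp add: p E_def)
  qed
qed

section \<open>The limit\<close>

lemma tendsto_by_scaled_bound:
  assumes "\<And>\<epsilon>. 0 < \<epsilon> \<Longrightarrow> \<epsilon> \<le> 1 \<Longrightarrow> \<forall>\<^sub>F t in F. dist (f t) l \<le> C * \<epsilon>"
  shows "(f \<longlongrightarrow> l) F"
proof (rule tendstoI)
  fix e :: real assume "e > 0"
  define \<epsilon> where "\<epsilon> = min 1 (e / (2 * (\<bar>C\<bar> + 1)))"
  have "0 < \<epsilon>" "\<epsilon> \<le> 1" using \<open>e > 0\<close> by (auto simp: \<epsilon>_def)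
  have "C * \<epsilon> \<le> \<bar>C\<bar> * (e / (2 * (\<bar>C\<bar> + 1)))"
    using \<open>0 < \<epsilon>\<close> by (intro order_trans[OF mult_right_mono[OF abs_ge_self] mult_left_mono])
      (auto simp: \<epsilon>_def)
  also have "\<dots> = e * (\<bar>C\<bar> / (2 * (\<bar>C\<bar> + 1)))"
    by simp
  also have "\<dots> < e"
  proof -
    have "\<bar>C\<bar> / (2 * (\<bar>C\<bar> + 1)) < 1" by (simp add: divide_less_eq)
    then have "e * (\<bar>C\<bar> / (2 * (\<bar>C\<bar> + 1))) < e * 1"
      using \<open>e > 0\<close> by (rule mult_strict_left_mono)
    then show ?thesis by simp
  qed
  finally have "C * \<epsilon> < e" .
  then show "\<forall>\<^sub>F t in F. dist (f t) l < e"
    using assms[OF \<open>0 < \<epsilon>\<close> \<open>\<epsilon> \<le> 1\<close>] by (auto elim: eventually_mono)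
qed

lemma tendsto_mirror_balanced:
  assumes "S \<subseteq> {(a, b, c). balanced a b c}"
  shows "((\<lambda>(a, b, c). mirror a b c) \<longlongrightarrow> x) (at (x, x, x) within S)"
proof (rule LIM_zero_cancel, rule Lim_null_comparison)
  let ?g = "\<lambda>(a, b, c). norm (a - x) + 2 * max (norm (b - x)) (norm (c - x))"
  have "norm ((case t of (a, b, c) \<Rightarrow> mirror a b c) - x) \<le> ?g t" if "t \<in> S" for t
    using assms that by (cases t) (auto intro: norm_mirror_sub_le)
  then show "\<forall>\<^sub>F t in at (x, x, x) within S. norm ((case t of (a, b, c) \<Rightarrow> mirror a b c) - x) \<le> ?g t"
    unfolding eventually_at_filter by (simp add: always_eventually)
  have "continuous (at (x, x, x) within S) ?g"
    unfolding case_prod_beta by (intro continuous_intros)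
  then show "(?g \<longlongrightarrow> 0) (at (x, x, x) within S)"
    by (simp add: continuous_within)
qed

lemma mirror_quotient_estimate:
  fixes s :: "real^2 \<Rightarrow> real^'n"
  assumes "nondegenerate a b c"
    and "norm (s (mirror a b c) - s a - ((mirror a b c - a) $ 1 *\<^sub>R P + (mirror a b c - a) $ 2 *\<^sub>R Q))
      \<le> \<epsilon> * norm (mirror a b c - a)"
    and "norm (s c - s b - ((c - b) $ 1 *\<^sub>R P + (c - b) $ 2 *\<^sub>R Q)) \<le> \<epsilon> * norm (c - b)"
  shows "norm ((1 / dotI2 (tri a b c - tri (mirror a b c) b c)) *\<^sub>R
      (tri (s a) (s b) (s c) - tri (s (mirror a b c)) (s b) (s c)) - wedge P Q)
    \<le> 2 * \<epsilon> * (2 * (norm P + norm Q) + \<epsilon>)"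
proof -
  have "b \<noteq> c" using assms(1) by (rule nondegenerate_imp_neq)
  have "norm (mirror a b c - a) * norm (c - b) = \<bar>dotI2 (wedge (mirror a b c - a) (c - b))\<bar>"
    using mirror_sub_orthogonal[OF \<open>b \<noteq> c\<close>] by (rule norm_mult_norm_eq_abs_dotI2_wedge)
  moreover have "dotI2 (wedge (mirror a b c - a) (c - b)) \<noteq> 0"
    using assms(1) by (simp add: dotI2_wedge_mirror_sub[OF \<open>b \<noteq> c\<close>] nondegenerate_iff_dotI2)
  ultimately show ?thesis
    unfolding tri_diff using wedge_quotient_estimate[OF assms(2,3)] by simp
qed

lemma eventually_mirror_pairs:
  assumes "S \<subseteq> {(a, b, c). balanced a b c}" and P: "\<forall>\<^sub>F p in nhds (x, x). P p"
  shows "\<forall>\<^sub>F (a, b, c) in at (x, x, x) within S. (a, b, c) \<in> S \<and> P (mirror a b c, a) \<and> P (c, b)"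
proof -
  note id = tendsto_ident_at[of "(x, x, x)" S]
  have a: "((\<lambda>t. fst t) \<longlongrightarrow> x) (at (x, x, x) within S)"
    and b: "((\<lambda>t. fst (snd t)) \<longlongrightarrow> x) (at (x, x, x) within S)"
    and c: "((\<lambda>t. snd (snd t)) \<longlongrightarrow> x) (at (x, x, x) within S)"
    using tendsto_fst[OF id] tendsto_fst[OF tendsto_snd[OF id]] tendsto_snd[OF tendsto_snd[OF id]]
    by simp_all
  have "\<forall>\<^sub>F t in at (x, x, x) within S. t \<in> S"
    by (simp add: eventually_at_filter)
  moreover have "\<forall>\<^sub>F t in at (x, x, x) within S. P (case t of (a, b, c) \<Rightarrow> mirror a b c, fst t)"
    by (rule eventually_compose_filterlim[OF P tendsto_Pair[OF tendsto_mirror_balanced[OF assms(1)] a]])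
  moreover have "\<forall>\<^sub>F t in at (x, x, x) within S. P (snd (snd t), fst (snd t))"
    by (rule eventually_compose_filterlim[OF P tendsto_Pair[OF c b]])
  ultimately show ?thesis
    by eventually_elim auto
qed

theorem theorem2:
  fixes \<Omega> :: "(real^2) set" and s :: "real^2 \<Rightarrow> real^'n" and x :: "real^2"
  assumes "open \<Omega>" and "smooth_surface \<Omega> s" and "x \<in> \<Omega>"
  shows "((\<lambda>(a, b, c). (1 / dotI2 (tri a b c - tri (mirror a b c) b c)) *\<^sub>R
            (tri (s a) (s b) (s c) - tri (s (mirror a b c)) (s b) (s c)))
         \<longlongrightarrow> wedge (pds 1 s x) (pds 2 s x))
         (at (x, x, x) within
            {(a, b, c). nondegenerate a b c \<and> balanced a b c
               \<and> a \<in> \<Omega> \<and> b \<in> \<Omega> \<and> c \<in> \<Omega> \<and> mirror a b c \<in> \<Omega>})"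
    (is "(?F \<longlongrightarrow> ?W) (at _ within ?S)")
proof (rule tendsto_by_scaled_bound)
  fix \<epsilon> :: real assume "0 < \<epsilon>" "\<epsilon> \<le> 1"
  let ?K = "norm (pds 1 s x) + norm (pds 2 s x)"
  let ?D = "\<lambda>(y, z). norm (s y - s z - ((y - z) $ 1 *\<^sub>R pds 1 s x + (y - z) $ 2 *\<^sub>R pds 2 s x))
    \<le> \<epsilon> * norm (y - z)"
  have "\<forall>\<^sub>F p in nhds (x, x). ?D p"
    using assms \<open>0 < \<epsilon>\<close> unfolding smooth_surface_def smooth_fun_def C2_on_def
    by (intro surface_strict_estimate) blast+
  then have "\<forall>\<^sub>F (a, b, c) in at (x, x, x) within ?S.
      (a, b, c) \<in> ?S \<and> ?D (mirror a b c, a) \<and> ?D (c, b)"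
    by (intro eventually_mirror_pairs) auto
  then show "\<forall>\<^sub>F t in at (x, x, x) within ?S. dist (?F t) ?W \<le> 2 * (2 * ?K + 1) * \<epsilon>"
  proof (rule eventually_mono)
    fix t assume "case t of (a, b, c) \<Rightarrow> (a, b, c) \<in> ?S \<and> ?D (mirror a b c, a) \<and> ?D (c, b)"
    moreover obtain a b c where t: "t = (a, b, c)" by (cases t)
    ultimately have "dist (?F t) ?W \<le> 2 * \<epsilon> * (2 * ?K + \<epsilon>)"
      unfolding t dist_norm case_prod_conv mem_Collect_eq by (intro mirror_quotient_estimate) simp_all
    also have "\<dots> \<le> 2 * (2 * ?K + 1) * \<epsilon>"
      using \<open>0 < \<epsilon>\<close> \<open>\<epsilon> \<le> 1\<close> by (simp add: algebra_simps)
    finally show "dist (?F t) ?W \<le> 2 * (2 * ?K + 1) * \<epsilon>" .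
  qed
qed

end
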